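(* Let $\alpha>0$ and let $W\in\mathbb{R}^{\mathcal{Q}\times\mathcal{X}}$ be a symmetric workload matrix, written $W=(W^+,W^-)$ with $W^+\in\mathbb{R}^{\mathcal{Q}\times\mathcal{X}^+}$. Then $\gamma_2(W)=\gamma_2(W^+)$ and $\gamma_2(W,\alpha)=\gamma_2(W^+,\alpha)$. Moreover, if for some $U^+\in\mathbb{R}^{\mathcal{Q}\times\mathcal{X}^+}$ \[ \gamma_2(W^+,\alpha)=\frac{W^+\bullet U^+-\alpha\|U^+\|_1}{\gamma_2^*(U^+)}, \] then \[ \gamma_2(W,\alpha)=\frac{W\bullet U-\alpha\|U\|_1}{\gamma_2^*(U)}, \] where $U=\frac12(U^+,U^-)\in\mathbb{R}^{\mathcal{Q}\times\mathcal{X}}$ and the submatrix $U^-$, indexed by $\mathcal{X}^-$, has entries $u^-_{q,-x}=-u^+_{q,x}$ for all $x\in\mathcal{X}^+$, $q\in\mathcal{Q}$.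
   Context: $W$ is symmetric if $\mathcal{X}$ is partitioned into $\mathcal{X}^+,\mathcal{X}^-$ with a bijection $x\mapsto-x$ from $\mathcal{X}^+$ to $\mathcal{X}^-$ such that $w_{q,-x}=-w_{q,x}$ for all $q$ and $x\in\mathcal{X}^+$; $W^+,W^-$ are the column restrictions to $\mathcal{X}^+,\mathcal{X}^-$. $M\bullet N=\sum m_{i,j}n_{i,j}$, $\|U\|_1=\sum|u_{i,j}|$. For matrices, $\|M\|_{1\to2}$ = max column $\ell_2$ norm, $\|M\|_{2\to\infty}$ = max row $\ell_2$ norm, $\|M\|_{1\to\infty}$ = max absolute entry; $\gamma_2(M)=\min\{\|R\|_{2\to\infty}\|A\|_{1\to2}:RA=M\}$, $\gamma_2(W,\alpha)=\min\{\gamma_2(\widetilde W):\|W-\widetilde W\|_{1\to\infty}\le\alpha/2\}$, and $\gamma_2^*(U)=\max\{U\bullet V:\gamma_2(V)\le1\}$. *)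

theory Defs
  imports Complex_Main
begin

text \<open>Matrices with rows indexed by a finite set Q and columns by a finite set X
are represented as functions of type 'q => 'x => real; only entries in Q x X matter.\<close>

definition norm_2_inf :: "'q set \<Rightarrow> nat \<Rightarrow> ('q \<Rightarrow> nat \<Rightarrow> real) \<Rightarrow> real" where
  "norm_2_inf Q k R = Max (insert 0 ((\<lambda>q. sqrt (\<Sum>j<k. (R q j)^2)) ` Q))"

definition norm_1_2 :: "nat \<Rightarrow> 'x set \<Rightarrow> (nat \<Rightarrow> 'x \<Rightarrow> real) \<Rightarrow> real" where
  "norm_1_2 k X A = Max (insert 0 ((\<lambda>x. sqrt (\<Sum>j<k. (A j x)^2)) ` X))"

definition norm_1_inf :: "'q set \<Rightarrow> 'x set \<Rightarrow> ('q \<Rightarrow> 'x \<Rightarrow> real) \<Rightarrow> real" where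
  "norm_1_inf Q X M = Max (insert 0 ((\<lambda>(q,x). \<bar>M q x\<bar>) ` (Q \<times> X)))"

definition gamma2 :: "'q set \<Rightarrow> 'x set \<Rightarrow> ('q \<Rightarrow> 'x \<Rightarrow> real) \<Rightarrow> real" where
  "gamma2 Q X M = Inf {norm_2_inf Q k R * norm_1_2 k X A | k R A.
       \<forall>q\<in>Q. \<forall>x\<in>X. (\<Sum>j<k. R q j * A j x) = M q x}"

definition gamma2_approx :: "'q set \<Rightarrow> 'x set \<Rightarrow> ('q \<Rightarrow> 'x \<Rightarrow> real) \<Rightarrow> real \<Rightarrow> real" where
  "gamma2_approx Q X W \<alpha> = Inf {gamma2 Q X W' | W'. norm_1_inf Q X (\<lambda>q x. W q x - W' q x) \<le> \<alpha> / 2}"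

definition mdot :: "'q set \<Rightarrow> 'x set \<Rightarrow> ('q \<Rightarrow> 'x \<Rightarrow> real) \<Rightarrow> ('q \<Rightarrow> 'x \<Rightarrow> real) \<Rightarrow> real" where
  "mdot Q X M N = (\<Sum>q\<in>Q. \<Sum>x\<in>X. M q x * N q x)"

definition entry_l1 :: "'q set \<Rightarrow> 'x set \<Rightarrow> ('q \<Rightarrow> 'x \<Rightarrow> real) \<Rightarrow> real" where
  "entry_l1 Q X U = (\<Sum>q\<in>Q. \<Sum>x\<in>X. \<bar>U q x\<bar>)"

definition gamma2_dual :: "'q set \<Rightarrow> 'x set \<Rightarrow> ('q \<Rightarrow> 'x \<Rightarrow> real) \<Rightarrow> real" where
  "gamma2_dual Q X U = Sup {mdot Q X U V | V. gamma2 Q X V \<le> 1}"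

definition symmetric_workload ::
  "'q set \<Rightarrow> 'x set \<Rightarrow> 'x set \<Rightarrow> 'x set \<Rightarrow> ('x \<Rightarrow> 'x) \<Rightarrow> ('q \<Rightarrow> 'x \<Rightarrow> real) \<Rightarrow> bool" where
  "symmetric_workload Q X Xp Xm neg W \<longleftrightarrow>
     Xp \<union> Xm = X \<and> Xp \<inter> Xm = {} \<and> bij_betw neg Xp Xm \<and>
     (\<forall>q\<in>Q. \<forall>x\<in>Xp. W q (neg x) = - W q x)"

definition sym_extend :: "'x set \<Rightarrow> ('x \<Rightarrow> 'x) \<Rightarrow> ('q \<Rightarrow> 'x \<Rightarrow> real) \<Rightarrow> ('q \<Rightarrow> 'x \<Rightarrow> real)" where
  "sym_extend Xp neg Up = (\<lambda>q y. if y \<in> Xp then Up q y / 2 else - Up q (inv_into Xp neg y) / 2)"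

end

theory Submission
  imports Defs "HOL-Analysis.L2_Norm"
begin

text \<open>Everything rests on one inequality: right multiplication by a matrix T whose columns have
  l1-norm at most 1 increases neither gamma2 nor gamma2(-, alpha), since a factorization M = R A
  yields M T = R (A T) and the columns of A T are such combinations of the columns of A.
  Restriction to Xp is such a T, and so is the extension matrix that rebuilds an antisymmetric
  matrix from its restriction to Xp; this gives both equalities. For the dual norm, pairing with
  the extended U only sees the antisymmetric part (V x - V (neg x)) / 2 of V, which is V times
  such a matrix, so both suprema range over the same set of values.\<close>

lemma L2_set_mult_right_abs: "L2_set (\<lambda>j. f j * c) A = L2_set f A * \<bar>c\<bar>"
  unfolding L2_set_def by (simp add: power_mult_distrib real_sqrt_mult flip: sum_distrib_right)

lemma L2_set_sum_le: "L2_set (\<lambda>j. \<Sum>x\<in>X. f x j) K \<le> (\<Sum>x\<in>X. L2_set (f x) K)"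
proof (induction X rule: infinite_finite_induct)
  case (insert x X)
  have "L2_set (\<lambda>j. \<Sum>y\<in>insert x X. f y j) K = L2_set (\<lambda>j. f x j + (\<Sum>y\<in>X. f y j)) K"
    using insert.hyps by simp
  also have "\<dots> \<le> L2_set (f x) K + L2_set (\<lambda>j. \<Sum>y\<in>X. f y j) K"
    by (rule L2_set_triangle_ineq)
  also have "\<dots> \<le> (\<Sum>y\<in>insert x X. L2_set (f y) K)"
    using insert by simp
  finally show ?case .
qed (simp_all add: L2_set_def)

lemma L2_set_le_norm_1_2:
  "finite X \<Longrightarrow> x \<in> X \<Longrightarrow> L2_set (\<lambda>j. A j x) {..<k} \<le> norm_1_2 k X A"
  unfolding norm_1_2_def L2_set_def by (rule Max_ge) auto

lemma norm_1_2_le: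
  "finite X \<Longrightarrow> 0 \<le> c \<Longrightarrow> (\<And>x. x \<in> X \<Longrightarrow> L2_set (\<lambda>j. A j x) {..<k} \<le> c) \<Longrightarrow>
    norm_1_2 k X A \<le> c"
  unfolding norm_1_2_def L2_set_def by (subst Max_le_iff) auto

lemma norm_1_2_nonneg: "finite X \<Longrightarrow> 0 \<le> norm_1_2 k X A"
  unfolding norm_1_2_def by (rule Max_ge) auto

lemma norm_2_inf_nonneg: "finite Q \<Longrightarrow> 0 \<le> norm_2_inf Q k R"
  unfolding norm_2_inf_def by (rule Max_ge) auto

lemma abs_le_norm_1_inf:
  "finite Q \<Longrightarrow> finite X \<Longrightarrow> q \<in> Q \<Longrightarrow> x \<in> X \<Longrightarrow> \<bar>M q x\<bar> \<le> norm_1_inf Q X M"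
  unfolding norm_1_inf_def by (rule Max_ge) auto

lemma norm_1_inf_le:
  "finite Q \<Longrightarrow> finite X \<Longrightarrow> 0 \<le> c \<Longrightarrow> (\<And>q x. q \<in> Q \<Longrightarrow> x \<in> X \<Longrightarrow> \<bar>M q x\<bar> \<le> c) \<Longrightarrow>
    norm_1_inf Q X M \<le> c"
  unfolding norm_1_inf_def by (subst Max_le_iff) auto

definition factorization_costs :: "'q set \<Rightarrow> 'x set \<Rightarrow> ('q \<Rightarrow> 'x \<Rightarrow> real) \<Rightarrow> real set" where
  "factorization_costs Q X M = {norm_2_inf Q k R * norm_1_2 k X A | k R A.
       \<forall>q\<in>Q. \<forall>x\<in>X. (\<Sum>j<k. R q j * A j x) = M q x}"

lemma gamma2_eq_Inf_factorization_costs: "gamma2 Q X M = Inf (factorization_costs Q X M)"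
  by (simp add: gamma2_def factorization_costs_def)

lemma factorization_costs_nonneg:
  "finite Q \<Longrightarrow> finite X \<Longrightarrow> c \<in> factorization_costs Q X M \<Longrightarrow> 0 \<le> c"
  unfolding factorization_costs_def
  by (auto intro!: mult_nonneg_nonneg norm_2_inf_nonneg norm_1_2_nonneg)

text \<open>The trivial factorization M = I M, with I the identity on an enumeration of Q.\<close>
lemma factorization_costs_nonempty:
  assumes "finite Q"
  shows "factorization_costs Q X M \<noteq> {}"
proof -
  obtain h where h: "bij_betw h Q {..<card Q}"
    using ex_bij_betw_finite_nat[OF assms] atLeast0LessThan by metis
  define R where "R q j = (of_bool (j = h q) :: real)" for q j
  define A where "A j x = M (inv_into Q h j) x" for j x
  have "(\<Sum>j<card Q. R q j * A j x) = M q x" if "q \<in> Q" for q x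
  proof -
    have "h q \<in> {..<card Q}" "inv_into Q h (h q) = q"
      using h that by (auto simp: bij_betw_def inv_into_f_f)
    then show ?thesis by (simp add: R_def A_def)
  qed
  then show ?thesis unfolding factorization_costs_def by blast
qed

lemma gamma2_nonneg: "finite Q \<Longrightarrow> finite X \<Longrightarrow> 0 \<le> gamma2 Q X M"
  unfolding gamma2_eq_Inf_factorization_costs
  by (rule cInf_greatest) (auto simp: factorization_costs_nonempty factorization_costs_nonneg)

lemma gamma2_mult_right_le:
  fixes T :: "'x \<Rightarrow> 'y \<Rightarrow> real"
  assumes fin: "finite Q" "finite X" "finite Y"
    and prod: "\<And>q y. q \<in> Q \<Longrightarrow> y \<in> Y \<Longrightarrow> M' q y = (\<Sum>x\<in>X. M q x * T x y)"
    and col: "\<And>y. y \<in> Y \<Longrightarrow> (\<Sum>x\<in>X. \<bar>T x y\<bar>) \<le> 1"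
  shows "gamma2 Q Y M' \<le> gamma2 Q X M"
  unfolding gamma2_eq_Inf_factorization_costs
proof (rule cInf_mono)
  show "factorization_costs Q X M \<noteq> {}"
    using fin(1) by (rule factorization_costs_nonempty)
  show "bdd_below (factorization_costs Q Y M')"
    using fin factorization_costs_nonneg by (meson bdd_below.I)
  fix c assume "c \<in> factorization_costs Q X M"
  then obtain k R A where c: "c = norm_2_inf Q k R * norm_1_2 k X A"
    and RA: "\<And>q x. q \<in> Q \<Longrightarrow> x \<in> X \<Longrightarrow> (\<Sum>j<k. R q j * A j x) = M q x"
    unfolding factorization_costs_def by blast
  define A' where "A' j y = (\<Sum>x\<in>X. A j x * T x y)" for j y
  have "(\<Sum>j<k. R q j * A' j y) = M' q y" if "q \<in> Q" "y \<in> Y" for q y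
  proof -
    have "(\<Sum>j<k. R q j * A' j y) = (\<Sum>x\<in>X. (\<Sum>j<k. R q j * A j x) * T x y)"
      unfolding A'_def
      by (simp add: sum_distrib_left sum_distrib_right mult.assoc sum.swap[of _ X])
    also have "\<dots> = M' q y"
      using that by (simp add: RA prod)
    finally show ?thesis .
  qed
  moreover have "norm_1_2 k Y A' \<le> norm_1_2 k X A"
  proof (rule norm_1_2_le[OF fin(3) norm_1_2_nonneg[OF fin(2)]])
    fix y assume "y \<in> Y"
    have "L2_set (\<lambda>j. A' j y) {..<k} \<le> (\<Sum>x\<in>X. L2_set (\<lambda>j. A j x * T x y) {..<k})"
      unfolding A'_def by (rule L2_set_sum_le)
    also have "\<dots> = (\<Sum>x\<in>X. L2_set (\<lambda>j. A j x) {..<k} * \<bar>T x y\<bar>)"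
      by (simp add: L2_set_mult_right_abs)
    also have "\<dots> \<le> (\<Sum>x\<in>X. norm_1_2 k X A * \<bar>T x y\<bar>)"
      by (intro sum_mono mult_right_mono L2_set_le_norm_1_2 fin) auto
    also have "\<dots> \<le> norm_1_2 k X A"
      using col[OF \<open>y \<in> Y\<close>] norm_1_2_nonneg[OF fin(2)]
      by (simp add: mult_left_le flip: sum_distrib_left)
    finally show "L2_set (\<lambda>j. A' j y) {..<k} \<le> norm_1_2 k X A" .
  qed
  then have "norm_2_inf Q k R * norm_1_2 k Y A' \<le> c"
    unfolding c by (rule mult_left_mono[OF _ norm_2_inf_nonneg[OF fin(1)]])
  ultimately show "\<exists>c'\<in>factorization_costs Q Y M'. c' \<le> c"
    unfolding factorization_costs_def by blast
qed

lemma gamma2_approx_mult_right_le: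
  fixes T :: "'x \<Rightarrow> 'y \<Rightarrow> real"
  assumes fin: "finite Q" "finite X" "finite Y" and "0 \<le> \<alpha>"
    and prod: "\<And>q y. q \<in> Q \<Longrightarrow> y \<in> Y \<Longrightarrow> W' q y = (\<Sum>x\<in>X. W q x * T x y)"
    and col: "\<And>y. y \<in> Y \<Longrightarrow> (\<Sum>x\<in>X. \<bar>T x y\<bar>) \<le> 1"
  shows "gamma2_approx Q Y W' \<alpha> \<le> gamma2_approx Q X W \<alpha>"
  unfolding gamma2_approx_def
proof (rule cInf_mono)
  have "norm_1_inf Q X (\<lambda>q x. W q x - W q x) \<le> \<alpha> / 2"
    using fin \<open>0 \<le> \<alpha>\<close> by (intro norm_1_inf_le) auto
  then show "{gamma2 Q X V | V. norm_1_inf Q X (\<lambda>q x. W q x - V q x) \<le> \<alpha> / 2} \<noteq> {}"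
    by blast
  show "bdd_below {gamma2 Q Y V | V. norm_1_inf Q Y (\<lambda>q y. W' q y - V q y) \<le> \<alpha> / 2}"
    using gamma2_nonneg[OF fin(1,3)] by (intro bdd_belowI[of _ 0]) auto
  fix g assume "g \<in> {gamma2 Q X V | V. norm_1_inf Q X (\<lambda>q x. W q x - V q x) \<le> \<alpha> / 2}"
  then obtain V where g: "g = gamma2 Q X V"
    and close: "norm_1_inf Q X (\<lambda>q x. W q x - V q x) \<le> \<alpha> / 2"
    by blast
  define V' where "V' q y = (\<Sum>x\<in>X. V q x * T x y)" for q y
  have "gamma2 Q Y V' \<le> g"
    unfolding g using fin V'_def col by (rule gamma2_mult_right_le)
  moreover have "norm_1_inf Q Y (\<lambda>q y. W' q y - V' q y) \<le> \<alpha> / 2"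
  proof (rule norm_1_inf_le[OF fin(1,3)])
    show "0 \<le> \<alpha> / 2" using \<open>0 \<le> \<alpha>\<close> by simp
    fix q y assume "q \<in> Q" "y \<in> Y"
    have "\<bar>W' q y - V' q y\<bar> = \<bar>\<Sum>x\<in>X. (W q x - V q x) * T x y\<bar>"
      using \<open>q \<in> Q\<close> \<open>y \<in> Y\<close> by (simp add: prod V'_def left_diff_distrib sum_subtractf)
    also have "\<dots> \<le> (\<Sum>x\<in>X. \<alpha> / 2 * \<bar>T x y\<bar>)"
    proof (intro sum_abs[THEN order_trans] sum_mono)
      fix x assume "x \<in> X"
      then have "\<bar>W q x - V q x\<bar> \<le> \<alpha> / 2"
        using abs_le_norm_1_inf[OF fin(1,2) \<open>q \<in> Q\<close>] close by (meson order_trans)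
      then show "\<bar>(W q x - V q x) * T x y\<bar> \<le> \<alpha> / 2 * \<bar>T x y\<bar>"
        unfolding abs_mult by (rule mult_right_mono) simp_all
    qed
    also have "\<dots> = \<alpha> / 2 * (\<Sum>x\<in>X. \<bar>T x y\<bar>)"
      by (rule sum_distrib_left[symmetric])
    also have "\<dots> \<le> \<alpha> / 2"
      using col[OF \<open>y \<in> Y\<close>] \<open>0 \<le> \<alpha>\<close> by (intro mult_left_le) simp_all
    finally show "\<bar>W' q y - V' q y\<bar> \<le> \<alpha> / 2" .
  qed
  ultimately show
    "\<exists>g'\<in>{gamma2 Q Y V | V. norm_1_inf Q Y (\<lambda>q y. W' q y - V q y) \<le> \<alpha> / 2}. g' \<le> g"
    by blast
qed

lemma gamma2_subset_le:
  assumes "finite Q" "finite X" "Y \<subseteq> X"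
  shows "gamma2 Q Y M \<le> gamma2 Q X M"
  using assms finite_subset[OF assms(3,2)]
  by (intro gamma2_mult_right_le[where T = "\<lambda>x y. of_bool (x = y)"]) auto

lemma gamma2_approx_subset_le:
  assumes "finite Q" "finite X" "Y \<subseteq> X" "0 \<le> \<alpha>"
  shows "gamma2_approx Q Y W \<alpha> \<le> gamma2_approx Q X W \<alpha>"
  using assms finite_subset[OF assms(3,2)]
  by (intro gamma2_approx_mult_right_le[where T = "\<lambda>x y. of_bool (x = y)"]) auto

lemma mdot_commute: "mdot Q X M N = mdot Q X N M"
  unfolding mdot_def by (simp add: mult.commute)

locale symmetric_partition =
  fixes X Xp Xm :: "'x set" and neg :: "'x \<Rightarrow> 'x"
  assumes partition: "Xp \<union> Xm = X" and disjoint: "Xp \<inter> Xm = {}"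
    and bij: "bij_betw neg Xp Xm" and finite_X: "finite X"
begin

lemma finite_Xp: "finite Xp"
  using finite_X partition by auto

lemma Xp_subset_X: "Xp \<subseteq> X"
  using partition by auto

lemma Xm_eq_image: "Xm = neg ` Xp"
  using bij by (simp add: bij_betw_def)

lemma neg_in_X: "x \<in> Xp \<Longrightarrow> neg x \<in> X"
  using Xm_eq_image partition by auto

lemma neg_notin_Xp: "x \<in> Xp \<Longrightarrow> neg x \<notin> Xp"
  using Xm_eq_image disjoint by auto

lemma inv_into_neg: "x \<in> Xp \<Longrightarrow> inv_into Xp neg (neg x) = x"
  using bij by (simp add: bij_betw_def inv_into_f_f)

lemma member_X_cases:
  assumes "y \<in> X"
  obtains "y \<in> Xp" | x where "x \<in> Xp" "y = neg x"
  using assms partition Xm_eq_image by auto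

lemma sum_X_split: "(\<Sum>y\<in>X. g y) = (\<Sum>x\<in>Xp. g x) + (\<Sum>x\<in>Xp. g (neg x))"
proof -
  have "(\<Sum>y\<in>X. g y) = (\<Sum>x\<in>Xp. g x) + (\<Sum>y\<in>Xm. g y)"
    using sum.union_disjoint[OF finite_Xp _ disjoint] finite_X partition by auto
  also have "(\<Sum>y\<in>Xm. g y) = (\<Sum>x\<in>Xp. g (neg x))"
    using bij by (simp add: Xm_eq_image sum.reindex bij_betw_def)
  finally show ?thesis .
qed

text \<open>An antisymmetric matrix M on X is M|Xp times ext_weight, and V times antisym_weight is
  the antisymmetric part (V x - V (neg x)) / 2 of V, restricted to Xp.\<close>
definition ext_weight :: "'x \<Rightarrow> 'x \<Rightarrow> real" where
  "ext_weight x y = (if y \<in> Xp then of_bool (x = y) else - of_bool (x = inv_into Xp neg y))"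

definition antisym_weight :: "'x \<Rightarrow> 'x \<Rightarrow> real" where
  "antisym_weight x y = (of_bool (x = y) - of_bool (x = neg y)) / 2"

lemma sum_mult_ext_weight:
  "y \<in> Xp \<Longrightarrow> (\<Sum>x\<in>Xp. f x * ext_weight x y) = f y"
  "y \<in> Xp \<Longrightarrow> (\<Sum>x\<in>Xp. f x * ext_weight x (neg y)) = - f y"
  using finite_Xp by (simp_all add: ext_weight_def neg_notin_Xp inv_into_neg sum_negf)

lemma sum_abs_ext_weight: "y \<in> X \<Longrightarrow> (\<Sum>x\<in>Xp. \<bar>ext_weight x y\<bar>) = 1"
  by (erule member_X_cases) (simp_all add: ext_weight_def finite_Xp neg_notin_Xp inv_into_neg)

lemma sum_mult_antisym_weight:
  "y \<in> Xp \<Longrightarrow> (\<Sum>x\<in>X. f x * antisym_weight x y) = (f y - f (neg y)) / 2"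
  using finite_X Xp_subset_X neg_in_X
  by (auto simp: antisym_weight_def right_diff_distrib sum_subtractf
      simp flip: sum_divide_distrib)

lemma sum_abs_antisym_weight:
  assumes "y \<in> Xp"
  shows "(\<Sum>x\<in>X. \<bar>antisym_weight x y\<bar>) = 1"
proof -
  have abs_eq: "\<bar>antisym_weight x y\<bar> = (of_bool (x = y) + of_bool (x = neg y)) / 2" for x
    using neg_notin_Xp[OF assms] assms by (auto simp: antisym_weight_def)
  show ?thesis
    unfolding abs_eq sum_divide_distrib[symmetric] sum.distrib
    using assms finite_X Xp_subset_X neg_in_X by auto
qed

lemma antisymmetric_eq_mult_ext_weight:
  assumes neg_antisym: "\<And>q x. q \<in> Q \<Longrightarrow> x \<in> Xp \<Longrightarrow> M q (neg x) = - M q x"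
    and "q \<in> Q" "y \<in> X"
  shows "M q y = (\<Sum>x\<in>Xp. M q x * ext_weight x y)"
  using \<open>y \<in> X\<close>
  by (rule member_X_cases) (simp_all add: sum_mult_ext_weight neg_antisym \<open>q \<in> Q\<close>)

lemma gamma2_antisymmetric:
  assumes "finite Q"
    and neg_antisym: "\<And>q x. q \<in> Q \<Longrightarrow> x \<in> Xp \<Longrightarrow> M q (neg x) = - M q x"
  shows "gamma2 Q X M = gamma2 Q Xp M"
proof (rule antisym)
  show "gamma2 Q X M \<le> gamma2 Q Xp M"
    using \<open>finite Q\<close> finite_Xp finite_X
    by (rule gamma2_mult_right_le[where T = ext_weight])
      (auto intro: antisymmetric_eq_mult_ext_weight[where M = M, OF neg_antisym]
        simp: sum_abs_ext_weight)
  show "gamma2 Q Xp M \<le> gamma2 Q X M"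
    using \<open>finite Q\<close> finite_X Xp_subset_X by (rule gamma2_subset_le)
qed

lemma gamma2_approx_antisymmetric:
  assumes "finite Q" "0 \<le> \<alpha>"
    and neg_antisym: "\<And>q x. q \<in> Q \<Longrightarrow> x \<in> Xp \<Longrightarrow> W q (neg x) = - W q x"
  shows "gamma2_approx Q X W \<alpha> = gamma2_approx Q Xp W \<alpha>"
proof (rule antisym)
  show "gamma2_approx Q X W \<alpha> \<le> gamma2_approx Q Xp W \<alpha>"
    using \<open>finite Q\<close> finite_Xp finite_X \<open>0 \<le> \<alpha>\<close>
    by (rule gamma2_approx_mult_right_le[where T = ext_weight])
      (auto intro: antisymmetric_eq_mult_ext_weight[where M = W, OF neg_antisym]
        simp: sum_abs_ext_weight)
  show "gamma2_approx Q Xp W \<alpha> \<le> gamma2_approx Q X W \<alpha>"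
    using \<open>finite Q\<close> finite_X Xp_subset_X \<open>0 \<le> \<alpha>\<close> by (rule gamma2_approx_subset_le)
qed

lemma sym_extend_Xp [simp]: "x \<in> Xp \<Longrightarrow> sym_extend Xp neg U q x = U q x / 2"
  by (simp add: sym_extend_def)

lemma sym_extend_neg [simp]: "x \<in> Xp \<Longrightarrow> sym_extend Xp neg U q (neg x) = - U q x / 2"
  by (simp add: sym_extend_def neg_notin_Xp inv_into_neg)

lemma mdot_sym_extend:
  "mdot Q X (sym_extend Xp neg U) V = mdot Q Xp U (\<lambda>q x. (V q x - V q (neg x)) / 2)"
  unfolding mdot_def sum_X_split
  by (intro sum.cong refl)
    (simp add: sum_subtractf sum_negf diff_divide_distrib right_diff_distrib)

lemma mdot_antisymmetric_sym_extend:
  assumes neg_antisym: "\<And>q x. q \<in> Q \<Longrightarrow> x \<in> Xp \<Longrightarrow> W q (neg x) = - W q x"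
  shows "mdot Q X W (sym_extend Xp neg U) = mdot Q Xp W U"
proof -
  have "mdot Q X W (sym_extend Xp neg U) = mdot Q Xp U (\<lambda>q x. (W q x - W q (neg x)) / 2)"
    by (subst mdot_commute) (rule mdot_sym_extend)
  also have "\<dots> = mdot Q Xp W U"
    unfolding mdot_def by (intro sum.cong refl) (simp add: neg_antisym mult.commute)
  finally show ?thesis .
qed

lemma entry_l1_sym_extend: "entry_l1 Q X (sym_extend Xp neg U) = entry_l1 Q Xp U"
  unfolding entry_l1_def sum_X_split by (simp add: sum.distrib[symmetric] cong: sum.cong)

lemma gamma2_dual_sym_extend:
  assumes "finite Q"
  shows "gamma2_dual Q X (sym_extend Xp neg U) = gamma2_dual Q Xp U"
  unfolding gamma2_dual_def
proof (intro arg_cong[where f = Sup] set_eqI iffI)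
  fix z assume "z \<in> {mdot Q X (sym_extend Xp neg U) V | V. gamma2 Q X V \<le> 1}"
  then obtain V where z: "z = mdot Q X (sym_extend Xp neg U) V" and "gamma2 Q X V \<le> 1"
    by blast
  define V' where "V' q x = (V q x - V q (neg x)) / 2" for q x
  have "gamma2 Q Xp V' \<le> gamma2 Q X V"
    using \<open>finite Q\<close> finite_X finite_Xp
    by (rule gamma2_mult_right_le[where T = antisym_weight])
      (simp_all add: V'_def sum_mult_antisym_weight sum_abs_antisym_weight)
  moreover have "z = mdot Q Xp U V'"
    unfolding z mdot_sym_extend V'_def ..
  ultimately show "z \<in> {mdot Q Xp U V | V. gamma2 Q Xp V \<le> 1}"
    using \<open>gamma2 Q X V \<le> 1\<close> by (blast intro: order_trans)
next
  fix z assume "z \<in> {mdot Q Xp U V | V. gamma2 Q Xp V \<le> 1}"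
  then obtain V where z: "z = mdot Q Xp U V" and "gamma2 Q Xp V \<le> 1"
    by blast
  define V' where "V' q y = (\<Sum>x\<in>Xp. V q x * ext_weight x y)" for q y
  have "gamma2 Q X V' \<le> gamma2 Q Xp V"
    using \<open>finite Q\<close> finite_Xp finite_X
    by (rule gamma2_mult_right_le[where T = ext_weight])
      (simp_all add: V'_def sum_abs_ext_weight)
  moreover have "z = mdot Q X (sym_extend Xp neg U) V'"
    unfolding z mdot_sym_extend
    by (simp add: mdot_def V'_def sum_mult_ext_weight cong: sum.cong)
  ultimately show "z \<in> {mdot Q X (sym_extend Xp neg U) V | V. gamma2 Q X V \<le> 1}"
    using \<open>gamma2 Q Xp V \<le> 1\<close> by (blast intro: order_trans)
qed

end

theorem lemma3p10:
  fixes Q :: "'q set" and X Xp Xm :: "'x set" and neg :: "'x \<Rightarrow> 'x"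
    and W :: "'q \<Rightarrow> 'x \<Rightarrow> real" and \<alpha> :: real
  assumes "finite Q" and "finite X" and "\<alpha> > 0"
    and "symmetric_workload Q X Xp Xm neg W"
  shows "gamma2 Q X W = gamma2 Q Xp W
    \<and> gamma2_approx Q X W \<alpha> = gamma2_approx Q Xp W \<alpha>
    \<and> (\<forall>Up :: 'q \<Rightarrow> 'x \<Rightarrow> real.
           gamma2_approx Q Xp W \<alpha> = (mdot Q Xp W Up - \<alpha> * entry_l1 Q Xp Up) / gamma2_dual Q Xp Up
           \<longrightarrow> gamma2_approx Q X W \<alpha> =
               (mdot Q X W (sym_extend Xp neg Up) - \<alpha> * entry_l1 Q X (sym_extend Xp neg Up))
                 / gamma2_dual Q X (sym_extend Xp neg Up))"
proof -
  have "Xp \<union> Xm = X" "Xp \<inter> Xm = {}" "bij_betw neg Xp Xm"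
    and neg_antisym: "\<And>q x. q \<in> Q \<Longrightarrow> x \<in> Xp \<Longrightarrow> W q (neg x) = - W q x"
    using assms(4) unfolding symmetric_workload_def by auto
  then interpret symmetric_partition X Xp Xm neg
    using \<open>finite X\<close> by unfold_locales
  have gamma2: "gamma2 Q X W = gamma2 Q Xp W"
    using \<open>finite Q\<close> neg_antisym by (rule gamma2_antisymmetric)
  have approx: "gamma2_approx Q X W \<alpha> = gamma2_approx Q Xp W \<alpha>"
    using \<open>finite Q\<close> \<open>\<alpha> > 0\<close> neg_antisym by (intro gamma2_approx_antisymmetric) auto
  have mdot: "mdot Q X W (sym_extend Xp neg Up) = mdot Q Xp W Up" for Up
    using neg_antisym by (rule mdot_antisymmetric_sym_extend)
  show ?thesis
    unfolding gamma2 approx mdot entry_l1_sym_extend gamma2_dual_sym_extend[OF \<open>finite Q\<close>]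
    by simp
qed

end
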